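(* $$\sum_{n=1}^{\infty} \frac{1}{n^3 \binom{2n}{n}} = \frac{\pi\sqrt{3}}{18} \left(\psi'\!\left(\tfrac{1}{3}\right) - \psi'\!\left(\tfrac{2}{3}\right) \right) - \frac{4}{3} \zeta(3).$$
   Context: $\zeta$ denotes the Riemann zeta function; $\psi=\Gamma'/\Gamma$ is the digamma function and $\psi'$ its first derivative (the trigamma function), so $\psi'(x)=\sum_{k\ge0}(k+x)^{-2}$ for $x>0$; $\binom{2n}{n}$ is the central binomial coefficient. *)

theory Defs
  imports "HOL-Analysis.Analysis"
begin

definition zeta_nat :: "nat \<Rightarrow> real" where
  "zeta_nat s = (\<Sum>n. 1 / (real (Suc n)) ^ s)"

end

(*
  Write F_k(y) = sum_{n >= 1} y^n / (n^k binom(2n, n)), a power series of radius 4. Termwise,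
  y F_{k+1}'(y) = F_k(y), and the recurrence (n + 1) binom(2n + 2, n + 1) = 2 (2n + 1) binom(2n, n)
  gives (4 - y) F_0(y) = 2 F_1(y) + y. Along y = 4 sin^2 a this integrates to
  F_1(4 sin^2 a) = 2 a tan a and F_2(4 sin^2 a) = 2 a^2, so that d/da F_3(4 sin^2 a) = 4 a^2 cot a:
  the series in question, F_3(1), is the integral of 4 a^2 cot a over [0, pi/6].

  For r < 1, the function 4 a^2 Re Ln(1 - z) + 4 a Im Li_2(z) + 2 Re Li_3(z) of z = r e^{2ia} is a
  primitive of 8 a^2 r sin 2a / |1 - r e^{2ia}|^2, which differs from 4 a^2 cot a by at most 8 (1 - r)
  on (0, pi/3]. Letting r -> 1 expresses F_3(1) through Li_2 and Li_3 at w = e^{i pi/3} and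
  Li_3(1) = zeta(3). Splitting n into residue classes modulo 6 finally gives
  Im Li_2(w) = sqrt 3 / 12 (psi'(1/3) - psi'(2/3)) and Re Li_3(w) = zeta(3) / 3.
*)
theory Submission
  imports Defs
begin

lemma has_field_derivative_powser_euler:
  fixes c d :: "nat \<Rightarrow> 'a::{real_normed_field,banach}"
  assumes euler: "\<And>n. of_nat n * c n = d n"
    and summable_c: "\<And>w. norm w < K \<Longrightarrow> summable (\<lambda>n. c n * w ^ n)"
    and summable_d: "summable (\<lambda>n. d n * z ^ n)"
    and z: "norm z < K" "z \<noteq> 0"
  shows "((\<lambda>w. \<Sum>n. c n * w ^ n) has_field_derivative (\<Sum>n. d n * z ^ n) / z) (at z)"
proof -
  have "diffs c = (\<lambda>n. d (Suc n))"
    by (simp add: diffs_def euler[symmetric])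
  moreover have "(\<Sum>n. d n * z ^ n) = (\<Sum>n. d (Suc n) * z ^ n) * z"
    using powser_split_head(1)[OF summable_d] euler[of 0] by simp
  ultimately show ?thesis
    using termdiffs_strong'[OF summable_c z(1)] z(2) by simp
qed

lemma DERIV_zero_imp_eq:
  fixes f :: "real \<Rightarrow> real"
  assumes "a \<le> b" "continuous_on {a..b} f" "\<And>x. a < x \<Longrightarrow> x < b \<Longrightarrow> DERIV f x :> 0"
  shows "f b = f a"
  using assms DERIV_isconst_end[of a b f] by (cases "a = b") auto

lemma DERIV_abs_diff_increments_le:
  fixes f g f' g' :: "real \<Rightarrow> real"
  assumes "a \<le> b" "continuous_on {a..b} f" "continuous_on {a..b} g"
    and "\<And>x. a < x \<Longrightarrow> x < b \<Longrightarrow> (f has_real_derivative f' x) (at x)"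
    and "\<And>x. a < x \<Longrightarrow> x < b \<Longrightarrow> (g has_real_derivative g' x) (at x)"
    and "\<And>x. a < x \<Longrightarrow> x < b \<Longrightarrow> \<bar>f' x - g' x\<bar> \<le> M"
  shows "\<bar>(f b - f a) - (g b - g a)\<bar> \<le> M * (b - a)"
proof (cases "a = b")
  case False
  have "continuous_on {a..b} (\<lambda>x. f x - g x)"
    using assms(2,3) by (intro continuous_on_diff)
  moreover have "((\<lambda>x. f x - g x) has_real_derivative f' x - g' x) (at x)" if "a < x" "x < b" for x
    using assms(4,5) that by (intro DERIV_diff)
  ultimately obtain l z where z: "a < z" "z < b"
    and l: "((\<lambda>x. f x - g x) has_real_derivative l) (at z)"
    and eq: "(f b - g b) - (f a - g a) = (b - a) * l"
    using MVT[of a b "\<lambda>x. f x - g x"] \<open>a \<le> b\<close> False real_differentiable_def by force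
  have "l = f' z - g' z"
    using DERIV_unique[OF l] \<open>a < z\<close> \<open>z < b\<close> assms(4,5) DERIV_diff by blast
  with eq have "(f b - f a) - (g b - g a) = (b - a) * (f' z - g' z)"
    by (simp add: algebra_simps)
  then have "\<bar>(f b - f a) - (g b - g a)\<bar> = (b - a) * \<bar>f' z - g' z\<bar>"
    using \<open>a \<le> b\<close> by (simp add: abs_mult)
  also have "\<dots> \<le> (b - a) * M"
    using assms(1,6) z by (intro mult_left_mono) auto
  finally show ?thesis by (simp add: mult.commute)
qed simp

lemma sums_progression_iff:
  fixes f :: "nat \<Rightarrow> 'a::real_normed_vector"
  assumes "j < d"
  shows "(\<lambda>k. f (d * k + j)) sums s \<longleftrightarrow> (\<lambda>n. if n mod d = j then f n else 0) sums s"
proof -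
  let ?g = "\<lambda>n. if n mod d = j then f n else 0"
  have mono: "strict_mono (\<lambda>k. d * k + j)"
    using assms by (auto simp: strict_mono_def)
  have "?g n = 0" if "n \<notin> range (\<lambda>k. d * k + j)" for n
  proof -
    have "n = d * (n div d) + n mod d" by simp
    then show ?thesis using that by (metis rangeI)
  qed
  then have "(\<lambda>k. ?g (d * k + j)) sums s \<longleftrightarrow> ?g sums s"
    by (rule sums_mono_reindex[OF mono])
  moreover have "?g (d * k + j) = f (d * k + j)" for k
    using assms by simp
  ultimately show ?thesis by simp
qed

lemma half_le_sin:
  assumes "0 \<le> x" "x \<le> pi / 3"
  shows "x / 2 \<le> sin x"
proof -
  have "(\<lambda>t. sin t - t / 2) 0 \<le> (\<lambda>t. sin t - t / 2) x"
  proof (rule DERIV_nonneg_imp_nondecreasing[OF assms(1)])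
    fix t assume t: "0 \<le> t" "t \<le> x"
    have "cos (pi / 3) \<le> cos t" using t assms by (intro cos_monotone_0_pi_le) auto
    then have "cos t - 1 / 2 \<ge> 0" by (simp add: cos_60)
    moreover have "((\<lambda>t. sin t - t / 2) has_real_derivative cos t - 1 / 2) (at t)"
      by (auto intro!: derivative_eq_intros)
    ultimately show "\<exists>y. ((\<lambda>t. sin t - t / 2) has_real_derivative y) (at t) \<and> y \<ge> 0" by blast
  qed
  then show ?thesis by simp
qed

section \<open>The central binomial series\<close>

definition central_binom_coeff :: "nat \<Rightarrow> nat \<Rightarrow> real" where
  "central_binom_coeff k n = (if n = 0 then 0 else 1 / (real n ^ k * real ((2 * n) choose n)))"

definition central_binom_series :: "nat \<Rightarrow> real \<Rightarrow> real" where
  "central_binom_series k y = (\<Sum>n. central_binom_coeff k n * y ^ n)"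

lemma central_binomial_Suc:
  "Suc n * ((2 * Suc n) choose Suc n) = 2 * (2 * n + 1) * ((2 * n) choose n)"
proof -
  have "Suc n * ((2 * Suc n) choose Suc n) = Suc (Suc (2 * n)) * (Suc (2 * n) choose n)"
    using Suc_times_binomial[of n "Suc (2 * n)"] by simp
  also have "Suc (2 * n) choose n = Suc (2 * n) choose Suc n"
    using binomial_symmetric[of "Suc n" "Suc (2 * n)"] by simp
  finally have "Suc n * ((2 * Suc n) choose Suc n) = 2 * (Suc n * (Suc (2 * n) choose Suc n))"
    by simp
  also have "Suc n * (Suc (2 * n) choose Suc n) = Suc (2 * n) * ((2 * n) choose n)"
    by (rule Suc_times_binomial)
  finally show ?thesis by simp
qed

lemma central_binom_coeff_recurrence:
  "4 * central_binom_coeff 0 (Suc n) - central_binom_coeff 0 n - 2 * central_binom_coeff 1 (Suc n)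
     = (if n = 0 then 1 else 0)"
proof (cases "n = 0")
  case False
  define b where "b m = real ((2 * m) choose m)" for m
  have b_pos: "b m > 0" for m by (simp add: b_def)
  have rec: "real (Suc n) * b (Suc n) = 2 * (2 * real n + 1) * b n"
    using arg_cong[OF central_binomial_Suc[of n], of real] unfolding b_def
    by (simp only: of_nat_mult of_nat_add of_nat_numeral of_nat_1)
  have c: "central_binom_coeff k m = 1 / (real m ^ k * b m)" if "m \<noteq> 0" for k m
    using that by (simp add: central_binom_coeff_def b_def)
  have "4 * central_binom_coeff 0 (Suc n) - central_binom_coeff 0 n - 2 * central_binom_coeff 1 (Suc n)
      = (4 * real (Suc n) * b n - real (Suc n) * b (Suc n) - 2 * b n) / (real (Suc n) * b (Suc n) * b n)"
    using False b_pos[of n] b_pos[of "Suc n"] unfolding c[OF False] c[OF Suc_not_Zero]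
    by (simp add: field_simps del: of_nat_Suc)
  also have "\<dots> = 0" unfolding rec by (simp add: algebra_simps)
  finally show ?thesis using False by simp
next
  case True
  then show ?thesis by (simp add: central_binom_coeff_def)
qed

lemma abs_central_binom_coeff_le: "\<bar>central_binom_coeff k n\<bar> \<le> 2 * real n / 4 ^ n"
proof (cases "n = 0")
  case False
  have "1 / (real n ^ k * real ((2 * n) choose n)) \<le> 1 / real ((2 * n) choose n)"
    using False by (intro divide_left_mono) (auto simp: one_le_power)
  also have "\<dots> \<le> 1 / (4 ^ n / (2 * real n))"
    using False central_binomial_lower_bound[of n] by (intro divide_left_mono) auto
  finally show ?thesis using False by (simp add: central_binom_coeff_def)
qed (simp add: central_binom_coeff_def)

lemma summable_central_binom_series:
  assumes "\<bar>y\<bar> < 4"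
  shows "summable (\<lambda>n. central_binom_coeff k n * y ^ n)"
proof (rule summable_comparison_test')
  have "summable (\<lambda>n. diffs (\<lambda>_. 1) n * (\<bar>y\<bar> / 4) ^ n)"
    using assms by (intro termdiff_converges[where K = 1]) (auto intro: summable_geometric)
  then show "summable (\<lambda>n. 2 * (real (Suc n) * (\<bar>y\<bar> / 4) ^ n))"
    by (intro summable_mult) (simp add: diffs_def)
  fix n
  have "norm (central_binom_coeff k n * y ^ n) = \<bar>central_binom_coeff k n\<bar> * \<bar>y\<bar> ^ n"
    by (simp add: abs_mult power_abs)
  also have "\<dots> \<le> 2 * real n / 4 ^ n * \<bar>y\<bar> ^ n"
    by (intro mult_right_mono abs_central_binom_coeff_le) simp
  also have "\<dots> = 2 * (real n * (\<bar>y\<bar> / 4) ^ n)"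
    by (simp add: power_divide)
  also have "\<dots> \<le> 2 * (real (Suc n) * (\<bar>y\<bar> / 4) ^ n)"
    by (intro mult_left_mono mult_right_mono) auto
  finally show "norm (central_binom_coeff k n * y ^ n) \<le> 2 * (real (Suc n) * (\<bar>y\<bar> / 4) ^ n)" .
qed

lemma central_binom_series_zero [simp]: "central_binom_series k 0 = 0"
  unfolding central_binom_series_def powser_zero by (simp add: central_binom_coeff_def)

lemma central_binom_series_sums_Suc:
  assumes "\<bar>y\<bar> < 4"
  shows "(\<lambda>n. central_binom_coeff k (Suc n) * y ^ Suc n) sums central_binom_series k y"
  using summable_sums[OF summable_central_binom_series[OF assms, of k]]
  unfolding central_binom_series_def by (subst sums_Suc_iff) (simp add: central_binom_coeff_def)

lemma isCont_central_binom_series: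
  assumes "\<bar>y\<bar> < 4"
  shows "isCont (central_binom_series k) y"
  unfolding central_binom_series_def[abs_def]
  by (rule isCont_powser[where K = "(\<bar>y\<bar> + 4) / 2"])
    (use assms in \<open>auto intro: summable_central_binom_series\<close>)

lemma has_field_derivative_central_binom_series:
  assumes "y \<noteq> 0" "\<bar>y\<bar> < 4"
  shows "(central_binom_series (Suc k) has_field_derivative central_binom_series k y / y) (at y)"
  unfolding central_binom_series_def[abs_def]
proof (rule has_field_derivative_powser_euler[where K = 4])
  show "real n * central_binom_coeff (Suc k) n = central_binom_coeff k n" for n
    by (simp add: central_binom_coeff_def)
qed (use assms in \<open>auto intro: summable_central_binom_series\<close>)

lemma central_binom_series_0_eq:
  assumes "\<bar>y\<bar> < 4"
  shows "(4 - y) * central_binom_series 0 y = 2 * central_binom_series 1 y + y"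
proof -
  let ?c = central_binom_coeff and ?F = central_binom_series
  have "(\<lambda>n. 4 * (?c 0 (Suc n) * y ^ Suc n) - y * (?c 0 n * y ^ n) - 2 * (?c 1 (Suc n) * y ^ Suc n))
          sums (4 * ?F 0 y - y * ?F 0 y - 2 * ?F 1 y)"
    using assms unfolding central_binom_series_def
    by (intro sums_diff sums_mult central_binom_series_sums_Suc[unfolded central_binom_series_def]
          summable_sums summable_central_binom_series)
  moreover have "4 * (?c 0 (Suc n) * y ^ Suc n) - y * (?c 0 n * y ^ n) - 2 * (?c 1 (Suc n) * y ^ Suc n)
      = (if n = 0 then y else 0)" for n
  proof -
    have "4 * (?c 0 (Suc n) * y ^ Suc n) - y * (?c 0 n * y ^ n) - 2 * (?c 1 (Suc n) * y ^ Suc n)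
        = (4 * ?c 0 (Suc n) - ?c 0 n - 2 * ?c 1 (Suc n)) * y ^ Suc n"
      by (simp add: algebra_simps)
    then show ?thesis unfolding central_binom_coeff_recurrence by simp
  qed
  ultimately have "(\<lambda>n. if n = 0 then y else 0) sums (4 * ?F 0 y - y * ?F 0 y - 2 * ?F 1 y)"
    by simp
  moreover have "(\<lambda>n. if n = 0 then y else 0) sums y"
    using sums_single[of 0 "\<lambda>_. y"] by simp
  ultimately show ?thesis
    using sums_unique2 by (fastforce simp: algebra_simps)
qed

definition central_binom_quot :: "nat \<Rightarrow> real \<Rightarrow> real" where
  "central_binom_quot k y = (\<Sum>n. central_binom_coeff k (Suc n) * y ^ n)"

lemma central_binom_series_eq_quot:
  assumes "\<bar>y\<bar> < 4"
  shows "central_binom_series k y = central_binom_quot k y * y"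
  using powser_split_head(1)[OF summable_central_binom_series[OF assms, of k]]
  by (simp add: central_binom_quot_def central_binom_series_def central_binom_coeff_def)

lemma isCont_central_binom_quot:
  assumes "\<bar>y\<bar> < 4"
  shows "isCont (central_binom_quot k) y"
proof -
  have "summable (\<lambda>n. central_binom_coeff k n * ((\<bar>y\<bar> + 4) / 2) ^ n)"
    using assms by (intro summable_central_binom_series) auto
  then have "summable (\<lambda>n. central_binom_coeff k (Suc n) * ((\<bar>y\<bar> + 4) / 2) ^ n)"
    by (rule powser_split_head(3))
  then show ?thesis
    unfolding central_binom_quot_def[abs_def] by (rule isCont_powser) (use assms in auto)
qed

section \<open>The substitution y = 4 sin(a)^2\<close>

lemma abs_4_sin_sq_less:
  assumes "cos (x::real) \<noteq> 0"
  shows "\<bar>4 * sin x ^ 2\<bar> < 4"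
proof -
  have "cos x ^ 2 > 0" using assms by simp
  then have "sin x ^ 2 < 1" using sin_cos_squared_add[of x] by linarith
  then show ?thesis by simp
qed

lemma isCont_central_binom_series_sin_sq:
  assumes "cos x \<noteq> 0"
  shows "isCont (\<lambda>a. central_binom_series k (4 * sin a ^ 2)) x"
proof -
  have "isCont (\<lambda>a. 4 * sin a ^ 2) x" by (intro continuous_intros)
  then show ?thesis
    using isCont_o2 isCont_central_binom_series[OF abs_4_sin_sq_less[OF assms]] by blast
qed

lemma has_real_derivative_central_binom_series_sin_sq:
  assumes "sin x \<noteq> 0" "cos x \<noteq> 0"
  shows "((\<lambda>a. central_binom_series (Suc k) (4 * sin a ^ 2)) has_real_derivative
           2 * central_binom_series k (4 * sin x ^ 2) * cos x / sin x) (at x)"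
proof -
  have "((\<lambda>a. 4 * sin a ^ 2) has_real_derivative 8 * sin x * cos x) (at x)"
    by (auto intro!: derivative_eq_intros simp: power2_eq_square)
  moreover have "(central_binom_series (Suc k) has_real_derivative
      central_binom_series k (4 * sin x ^ 2) / (4 * sin x ^ 2)) (at (4 * sin x ^ 2))"
    using assms abs_4_sin_sq_less[OF assms(2)] by (intro has_field_derivative_central_binom_series) auto
  ultimately have "((\<lambda>a. central_binom_series (Suc k) (4 * sin a ^ 2)) has_real_derivative
      central_binom_series k (4 * sin x ^ 2) / (4 * sin x ^ 2) * (8 * sin x * cos x)) (at x)"
    by (rule DERIV_chain2[rotated])
  then show ?thesis
    using assms by (elim DERIV_cong) (simp add: field_simps power2_eq_square)
qed

lemma has_real_derivative_central_binom_series_1_cot: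
  assumes s: "sin x \<noteq> 0" and c: "cos x \<noteq> 0"
  shows "((\<lambda>a. central_binom_series 1 (4 * sin a ^ 2) * cot a - 2 * a) has_real_derivative 0) (at x)"
proof -
  define F0 F1 where "F0 = central_binom_series 0 (4 * sin x ^ 2)"
    and "F1 = central_binom_series 1 (4 * sin x ^ 2)"
  have ode: "2 * F0 * cos x ^ 2 = F1 + 2 * sin x ^ 2"
    using central_binom_series_0_eq[OF abs_4_sin_sq_less[OF c]]
    unfolding F0_def F1_def by (simp add: cos_squared_eq algebra_simps)
  have "((\<lambda>a. central_binom_series 1 (4 * sin a ^ 2) * cot a - 2 * a) has_real_derivative
          2 * F0 * cos x / sin x * cot x + (- inverse (sin x ^ 2)) * F1 - 2 * 1) (at x)"
    unfolding F1_def F0_def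
    by (intro DERIV_diff DERIV_mult DERIV_cot DERIV_cmult DERIV_ident s
        has_real_derivative_central_binom_series_sin_sq[OF s c, of 0, unfolded One_nat_def[symmetric]])
  moreover have "2 * F0 * cos x / sin x * cot x + (- inverse (sin x ^ 2)) * F1 - 2 * 1 = 0"
    using s ode by (simp add: cot_def field_simps power2_eq_square)
  ultimately show ?thesis by simp
qed

lemma central_binom_series_1_sin_sq:
  assumes a: "0 \<le> a" "a < pi / 2"
  shows "central_binom_series 1 (4 * sin a ^ 2) * cos a = 2 * a * sin a"
proof -
  let ?G = "\<lambda>t. central_binom_quot 1 (4 * sin t ^ 2)"
  have F_G: "central_binom_series 1 (4 * sin t ^ 2) = ?G t * (4 * sin t ^ 2)" if "cos t \<noteq> 0" for t
    using central_binom_series_eq_quot[OF abs_4_sin_sq_less[OF that]] .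
  have "isCont (\<lambda>t. 4 * sin t ^ 2) (t::real)" for t by (intro continuous_intros)
  then have cont_G: "isCont ?G t" if "cos t \<noteq> 0" for t
    using isCont_o2 isCont_central_binom_quot[OF abs_4_sin_sq_less[OF that]] by blast
  \<comment> \<open>\<open>H\<close> agrees with \<open>F\<^sub>1 (4 sin\<^sup>2 t) cot t - 2 t\<close> on \<open>0 < t < pi / 2\<close>
    but is continuous at \<open>t = 0\<close>.\<close>
  define H where "H t = 4 * sin t * cos t * ?G t - 2 * t" for t
  have "H a = H 0"
  proof (rule DERIV_zero_imp_eq[of 0 a H])
    have "isCont H t" if "t \<in> {0..a}" for t
      unfolding H_def using cont_G[of t] cos_gt_zero_pi[of t] that a by (auto intro!: continuous_intros)
    then show "continuous_on {0..a} H"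
      by (rule continuous_at_imp_continuous_on[OF ballI])
    fix x assume x: "0 < x" "x < a"
    have H_cot: "central_binom_series 1 (4 * sin t ^ 2) * cot t - 2 * t = H t" if "t \<in> {0<..<pi/2}" for t
    proof -
      have "sin t > 0" "cos t > 0" using that by (auto intro: sin_gt_zero cos_gt_zero_pi)
      then show ?thesis
        unfolding F_G[OF \<open>cos t > 0\<close>[THEN less_imp_neq, symmetric]]
        by (simp add: H_def cot_def power2_eq_square)
    qed
    have "sin x > 0" "cos x > 0" using x a by (auto intro: sin_gt_zero cos_gt_zero_pi)
    then have "((\<lambda>t. central_binom_series 1 (4 * sin t ^ 2) * cot t - 2 * t) has_real_derivative 0) (at x)"
      by (intro has_real_derivative_central_binom_series_1_cot) auto
    then show "DERIV H x :> 0"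
      by (rule has_field_derivative_transform_within_open[where S = "{0<..<pi/2}"])
        (use x a H_cot in auto)
  qed (use a in auto)
  then have G_eq: "4 * sin a * cos a * ?G a = 2 * a" by (simp add: H_def)
  have "cos a > 0" using a by (intro cos_gt_zero_pi) auto
  then have "central_binom_series 1 (4 * sin a ^ 2) * cos a = sin a * (4 * sin a * cos a * ?G a)"
    unfolding F_G[OF \<open>cos a > 0\<close>[THEN less_imp_neq, symmetric]]
    by (simp add: power2_eq_square algebra_simps)
  then show ?thesis unfolding G_eq by simp
qed

lemma central_binom_series_2_sin_sq:
  assumes a: "0 \<le> a" "a < pi / 2"
  shows "central_binom_series 2 (4 * sin a ^ 2) = 2 * a ^ 2"
proof -
  define H where "H t = central_binom_series 2 (4 * sin t ^ 2) - 2 * t ^ 2" for t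
  have "H a = H 0"
  proof (rule DERIV_zero_imp_eq[of 0 a H])
    have "cos t \<noteq> 0" if "t \<in> {0..a}" for t
      using that a cos_gt_zero_pi[of t] by force
    then show "continuous_on {0..a} H"
      unfolding H_def
      by (intro continuous_at_imp_continuous_on ballI continuous_intros isCont_central_binom_series_sin_sq)
    fix x assume x: "0 < x" "x < a"
    have "sin x > 0" "cos x > 0" using x a by (auto intro: sin_gt_zero cos_gt_zero_pi)
    then have "((\<lambda>t. central_binom_series 2 (4 * sin t ^ 2)) has_real_derivative
        2 * central_binom_series 1 (4 * sin x ^ 2) * cos x / sin x) (at x)"
      using has_real_derivative_central_binom_series_sin_sq[of x 1] by (simp add: numeral_2_eq_2)
    then have "(H has_real_derivative
        2 * central_binom_series 1 (4 * sin x ^ 2) * cos x / sin x - 2 * (2 * x)) (at x)"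
      unfolding H_def by (auto intro!: derivative_eq_intros)
    moreover have "2 * central_binom_series 1 (4 * sin x ^ 2) * cos x / sin x = 4 * x"
      using central_binom_series_1_sin_sq[of x] x a \<open>sin x > 0\<close> by (simp add: mult.assoc)
    ultimately show "DERIV H x :> 0" by simp
  qed (use a in auto)
  then show ?thesis by (simp add: H_def)
qed

lemma has_real_derivative_central_binom_series_3_sin_sq:
  assumes "0 < x" "x < pi / 2"
  shows "((\<lambda>a. central_binom_series 3 (4 * sin a ^ 2)) has_real_derivative 4 * x ^ 2 * cot x) (at x)"
proof -
  have "sin x > 0" "cos x > 0" using assms by (auto intro: sin_gt_zero cos_gt_zero_pi)
  with has_real_derivative_central_binom_series_sin_sq[of x 2] show ?thesis
    using central_binom_series_2_sin_sq[of x] assms by (simp add: cot_def numeral_3_eq_3)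
qed

section \<open>Polylogarithms on the closed unit disc\<close>

definition polylog_coeff :: "nat \<Rightarrow> nat \<Rightarrow> complex" where
  "polylog_coeff s n = (if n = 0 then 0 else 1 / of_nat n ^ s)"

definition polylog :: "nat \<Rightarrow> complex \<Rightarrow> complex" where
  "polylog s z = (\<Sum>n. polylog_coeff s n * z ^ n)"

lemma norm_polylog_coeff_le: "norm (polylog_coeff s n) \<le> 1"
proof (cases "n = 0")
  case False
  then have "1 \<le> real n ^ s" by (simp add: one_le_power)
  then show ?thesis by (simp add: polylog_coeff_def norm_divide norm_power)
qed (simp add: polylog_coeff_def)

lemma summable_polylog:
  assumes "norm z < 1"
  shows "summable (\<lambda>n. polylog_coeff s n * z ^ n)"
proof (rule summable_comparison_test')
  show "summable (\<lambda>n. norm z ^ n)" using assms by (intro summable_geometric) auto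
  show "norm (polylog_coeff s n * z ^ n) \<le> norm z ^ n" for n
    using norm_polylog_coeff_le[of s n] by (simp add: norm_mult norm_power mult_left_le_one_le)
qed

lemma summable_norm_polylog_coeff:
  assumes "2 \<le> s"
  shows "summable (\<lambda>n. norm (polylog_coeff s n))"
proof -
  have "norm (polylog_coeff s n) = inverse (real n ^ s)" for n
    using assms by (simp add: polylog_coeff_def norm_divide norm_power divide_inverse norm_inverse)
  then show ?thesis using inverse_power_summable[OF assms] by simp
qed

lemma norm_polylog_term_le:
  "norm z \<le> 1 \<Longrightarrow> norm (polylog_coeff s n * z ^ n) \<le> norm (polylog_coeff s n)"
  by (simp add: norm_mult norm_power mult_left_le power_le_one)

lemma polylog_sums:
  assumes "2 \<le> s" "norm z \<le> 1"
  shows "(\<lambda>n. polylog_coeff s n * z ^ n) sums polylog s z"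
proof -
  have "summable (\<lambda>n. norm (polylog_coeff s n * z ^ n))"
    by (rule summable_comparison_test'[OF summable_norm_polylog_coeff[OF assms(1)]])
      (simp add: norm_polylog_term_le assms(2))
  then show ?thesis
    unfolding polylog_def by (rule summable_sums[OF summable_norm_cancel])
qed

lemma continuous_on_polylog:
  assumes "2 \<le> s"
  shows "continuous_on (cball 0 1) (polylog s)"
proof (rule uniform_limit_theorem)
  show "uniform_limit (cball 0 1) (\<lambda>N z. \<Sum>n<N. polylog_coeff s n * z ^ n) (polylog s) sequentially"
    unfolding polylog_def[abs_def]
    by (rule Weierstrass_m_test[OF _ summable_norm_polylog_coeff[OF assms]]) (simp add: norm_polylog_term_le)
  show "\<forall>\<^sub>F N in sequentially. continuous_on (cball 0 1) (\<lambda>z. \<Sum>n<N. polylog_coeff s n * z ^ n)"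
    by (intro always_eventually allI continuous_intros)
qed simp

lemma has_field_derivative_polylog:
  assumes "z \<noteq> 0" "norm z < 1"
  shows "(polylog (Suc s) has_field_derivative polylog s z / z) (at z)"
  unfolding polylog_def[abs_def]
proof (rule has_field_derivative_powser_euler[where K = 1])
  show "of_nat n * polylog_coeff (Suc s) n = polylog_coeff s n" for n
    by (simp add: polylog_coeff_def)
qed (use assms in \<open>auto intro: summable_polylog\<close>)

lemma polylog_1:
  assumes "norm z < 1"
  shows "polylog 1 z = - Ln (1 - z)"
proof -
  have "(\<lambda>n. - ((- (- z)) ^ n) / of_nat n) sums Ln (1 + (- z))"
    using Ln_series'[of "- z"] assms by simp
  moreover have "polylog_coeff 1 n * z ^ n = z ^ n / of_nat n" for n
    by (simp add: polylog_coeff_def)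
  ultimately have "(\<lambda>n. - (polylog_coeff 1 n * z ^ n)) sums Ln (1 - z)"
    by simp
  then show ?thesis
    unfolding polylog_def using sums_minus by (fastforce simp: sums_iff)
qed

lemma rcis_one: "rcis 1 t = cis t"
  by (simp add: rcis_def)

lemma tendsto_polylog_rcis:
  assumes "2 \<le> s"
  shows "((\<lambda>r. polylog s (rcis r t)) \<longlongrightarrow> polylog s (cis t)) (at_left 1)"
proof (rule continuous_on_tendsto_compose[OF continuous_on_polylog[OF assms]])
  have "((\<lambda>r. rcis r t) \<longlongrightarrow> rcis 1 t) (at_left 1)"
    by (intro tendsto_intros)
  then show "((\<lambda>r. rcis r t) \<longlongrightarrow> cis t) (at_left 1)"
    by (simp add: rcis_one)
  show "\<forall>\<^sub>F r in at_left 1. rcis r t \<in> cball 0 1"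
    using eventually_at_left_real[of 0 "1::real"] by (rule eventually_mono) auto
qed simp

lemma has_vector_derivative_comp_rcis:
  assumes "(f has_field_derivative f') (at (rcis r (2 * a)))"
  shows "((\<lambda>t. f (rcis r (2 * t))) has_vector_derivative f' * (2 * \<i> * rcis r (2 * a))) (at a)"
proof -
  have e: "rcis r (2 * t) = of_real r * exp (\<i> * (2 * of_real t))" for t
    by (simp add: rcis_def cis_conv_exp)
  have "((\<lambda>w. of_real r * exp (\<i> * (2 * w))) has_field_derivative
          of_real r * exp (\<i> * (2 * of_real a)) * (\<i> * 2)) (at (of_real a))"
    by (auto intro!: derivative_eq_intros)
  from DERIV_chain2[OF assms[unfolded e] this]
  have "((\<lambda>t. f (of_real r * exp (\<i> * (2 * of_real t)))) has_vector_derivative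
          f' * (of_real r * exp (\<i> * (2 * of_real a)) * (\<i> * 2))) (at a)"
    by (rule has_vector_derivative_real_field)
  then show ?thesis unfolding e[symmetric] by (simp add: algebra_simps)
qed

lemma has_vector_derivative_Ln_rcis:
  assumes "0 \<le> r" "r < 1"
  shows "((\<lambda>t. Ln (1 - rcis r (2 * t))) has_vector_derivative
           - (2 * \<i> * rcis r (2 * a)) / (1 - rcis r (2 * a))) (at a)"
proof -
  have "Re (rcis r (2 * a)) < 1"
    using assms abs_Re_le_cmod[of "rcis r (2 * a)"] by simp
  then have "1 - rcis r (2 * a) \<notin> \<real>\<^sub>\<le>\<^sub>0"
    by (auto simp: complex_nonpos_Reals_iff)
  then have "((\<lambda>z. Ln (1 - z)) has_field_derivative - inverse (1 - rcis r (2 * a))) (at (rcis r (2 * a)))"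
    by (auto intro!: derivative_eq_intros)
  from has_vector_derivative_comp_rcis[OF this] show ?thesis
    by (simp add: divide_inverse mult.commute)
qed

lemma has_vector_derivative_polylog_rcis:
  assumes "0 < r" "r < 1"
  shows "((\<lambda>t. polylog (Suc s) (rcis r (2 * t))) has_vector_derivative
           2 * \<i> * polylog s (rcis r (2 * a))) (at a)"
proof -
  have "rcis r (2 * a) \<noteq> 0" "norm (rcis r (2 * a)) < 1" using assms by auto
  from has_vector_derivative_comp_rcis[OF has_field_derivative_polylog[OF this]] this(1)
  show ?thesis by (simp add: field_simps)
qed

lemma norm_one_minus_rcis_sq: "(cmod (1 - rcis r t))\<^sup>2 = 1 - 2 * r * cos t + r\<^sup>2"
proof -
  have "(cmod (1 - rcis r t))\<^sup>2 = (1 - r * cos t)\<^sup>2 + (r * sin t)\<^sup>2"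
    unfolding cmod_power2 by simp
  also have "\<dots> = 1 - 2 * r * cos t + r\<^sup>2 * ((sin t)\<^sup>2 + (cos t)\<^sup>2)"
    by algebra
  finally show ?thesis by simp
qed

lemma norm_one_minus_cis_double:
  assumes "0 \<le> sin b"
  shows "cmod (1 - cis (2 * b)) = 2 * sin b"
proof (rule power2_eq_imp_eq)
  show "(cmod (1 - cis (2 * b)))\<^sup>2 = (2 * sin b)\<^sup>2"
    using norm_one_minus_rcis_sq[of 1 "2 * b"] by (simp add: rcis_def cos_double_sin power2_eq_square)
qed (use assms in auto)

section \<open>Integrating 4 a^2 cot a\<close>

definition polylog_primitive :: "real \<Rightarrow> real \<Rightarrow> real" where
  "polylog_primitive r a = 4 * a\<^sup>2 * Re (Ln (1 - rcis r (2 * a)))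
     + 4 * a * Im (polylog 2 (rcis r (2 * a))) + 2 * Re (polylog 3 (rcis r (2 * a)))"

lemma has_real_derivative_polylog_primitive:
  assumes r: "0 < r" "r < 1"
  shows "(polylog_primitive r has_real_derivative
           8 * a\<^sup>2 * r * sin (2 * a) / (1 - 2 * r * cos (2 * a) + r\<^sup>2)) (at a)"
proof -
  define z where "z = rcis r (2 * a)"
  have "norm z < 1" using r by (simp add: z_def)
  have "Suc 1 = 2" "Suc 2 = 3" by simp_all
  note d_polylog = has_vector_derivative_polylog_rcis[OF r, of 1, unfolded this(1)]
    has_vector_derivative_polylog_rcis[OF r, of 2, unfolded this(2)]
  have "(polylog_primitive r has_real_derivative
         (4 * a\<^sup>2 * Re (- (2 * \<i> * z) / (1 - z)) + 8 * a * Re (Ln (1 - z)))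
       + (4 * a * Im (2 * \<i> * polylog 1 z) + 4 * Im (polylog 2 z))
       + 2 * Re (2 * \<i> * polylog 2 z)) (at a)"
    unfolding polylog_primitive_def[abs_def] z_def
    by (intro DERIV_add DERIV_mult' DERIV_cmult has_field_derivative_Re has_field_derivative_Im
        has_vector_derivative_Ln_rcis d_polylog)
      (use r in \<open>auto intro!: derivative_eq_intros\<close>)
  moreover have "Re (- (2 * \<i> * z) / (1 - z)) = 2 * Im z / (cmod (1 - z))\<^sup>2"
    unfolding cmod_power2 by (simp add: Re_divide power2_eq_square algebra_simps)
  \<comment> \<open>Since \<open>polylog 1 z = - Ln (1 - z)\<close>, all terms but the first cancel in pairs.\<close>
  ultimately show ?thesis
    using polylog_1[OF \<open>norm z < 1\<close>] norm_one_minus_rcis_sq[of r "2 * a"]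
    by (elim DERIV_cong) (simp add: z_def algebra_simps)
qed

lemma abs_deriv_polylog_primitive_minus_cot_le:
  assumes x: "0 < x" "x \<le> pi / 3" and r: "1 / 4 \<le> r" "r < 1"
  shows "\<bar>8 * x\<^sup>2 * r * sin (2 * x) / (1 - 2 * r * cos (2 * x) + r\<^sup>2) - 4 * x\<^sup>2 * cot x\<bar>
           \<le> 8 * (1 - r)"
proof -
  define s c D where "s = sin x" and "c = cos x" and "D = (1 - r)\<^sup>2 + 4 * r * s\<^sup>2"
  have s: "0 < s" "x \<le> 2 * s" unfolding s_def using x half_le_sin[of x] by (auto intro: sin_gt_zero)
  have c: "0 < c" "c \<le> 1" unfolding c_def using x by (auto intro: cos_gt_zero_pi)
  have D_eq: "1 - 2 * r * cos (2 * x) + r\<^sup>2 = D"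
    unfolding D_def s_def cos_double_sin by (simp add: power2_eq_square algebra_simps)
  have "2 * (1 - r) * s \<le> (1 - r)\<^sup>2 + s\<^sup>2"
    using sum_squares_bound[of "1 - r" s] by (simp add: power2_eq_square)
  also have "\<dots> \<le> D" unfolding D_def using mult_right_mono[of 1 "4 * r" "s\<^sup>2"] r by simp
  finally have D_ge: "2 * (1 - r) * s \<le> D" .
  moreover have "2 * (1 - r) * s > 0" using s r by simp
  ultimately have "D > 0" by linarith
  have "4 * x\<^sup>2 * cot x - 8 * x\<^sup>2 * r * sin (2 * x) / D = 4 * x\<^sup>2 * c * (1 - r)\<^sup>2 / (s * D)"
    using s \<open>D > 0\<close> unfolding sin_double cot_def s_def[symmetric] c_def[symmetric]
    by (simp add: field_simps D_def) (simp add: power2_eq_square algebra_simps)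
  moreover have "4 * x\<^sup>2 * c * (1 - r)\<^sup>2 \<le> 8 * (1 - r) * (s * D)"
  proof -
    have "4 * x\<^sup>2 * c * (1 - r)\<^sup>2 \<le> 4 * (2 * s)\<^sup>2 * 1 * (1 - r)\<^sup>2"
      using s c x r by (intro mult_mono power_mono) auto
    also have "\<dots> = 8 * (1 - r) * (s * (2 * (1 - r) * s))" by (simp add: power2_eq_square algebra_simps)
    also have "\<dots> \<le> 8 * (1 - r) * (s * D)"
      using D_ge s r by (intro mult_left_mono) auto
    finally show ?thesis .
  qed
  ultimately show ?thesis
    unfolding D_eq using s \<open>D > 0\<close> c by (simp add: abs_minus_commute divide_le_eq)
qed

lemma abs_polylog_primitive_diff_le:
  assumes b: "0 \<le> b" "b \<le> pi / 3" and r: "1 / 4 \<le> r" "r < 1"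
  shows "\<bar>(polylog_primitive r b - polylog_primitive r 0) - central_binom_series 3 (4 * sin b ^ 2)\<bar>
           \<le> 8 * (1 - r) * b"
proof -
  have "0 < r" using r by simp
  have cos_nz: "cos x \<noteq> 0" if "x \<in> {0..b}" for x
  proof -
    from that have "0 \<le> x" "x \<le> b" by auto
    with b pi_gt_zero have "x < pi / 2" by linarith
    then show ?thesis using that cos_gt_zero_pi[of x] by auto
  qed
  have "\<bar>(polylog_primitive r b - polylog_primitive r 0)
         - (central_binom_series 3 (4 * sin b ^ 2) - central_binom_series 3 (4 * sin 0 ^ 2))\<bar>
        \<le> 8 * (1 - r) * (b - 0)"
  proof (rule DERIV_abs_diff_increments_le)
    show "continuous_on {0..b} (polylog_primitive r)"
      using has_real_derivative_polylog_primitive[OF \<open>0 < r\<close> r(2)]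
      by (intro continuous_at_imp_continuous_on ballI DERIV_isCont) blast
    show "continuous_on {0..b} (\<lambda>a. central_binom_series 3 (4 * sin a ^ 2))"
      using cos_nz by (intro continuous_at_imp_continuous_on ballI isCont_central_binom_series_sin_sq)
    fix x assume x: "0 < x" "x < b"
    show "(polylog_primitive r has_real_derivative
            8 * x\<^sup>2 * r * sin (2 * x) / (1 - 2 * r * cos (2 * x) + r\<^sup>2)) (at x)"
      using has_real_derivative_polylog_primitive[OF \<open>0 < r\<close> r(2)] .
    show "((\<lambda>a. central_binom_series 3 (4 * sin a ^ 2)) has_real_derivative 4 * x\<^sup>2 * cot x) (at x)"
      using x b by (intro has_real_derivative_central_binom_series_3_sin_sq) auto
    show "\<bar>8 * x\<^sup>2 * r * sin (2 * x) / (1 - 2 * r * cos (2 * x) + r\<^sup>2) - 4 * x\<^sup>2 * cot x\<bar>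
        \<le> 8 * (1 - r)"
      using x b r by (intro abs_deriv_polylog_primitive_minus_cot_le) auto
  qed (use b in auto)
  then show ?thesis by simp
qed

lemma tendsto_polylog_primitive_diff:
  assumes "0 < b" "b < pi"
  shows "((\<lambda>r. polylog_primitive r b - polylog_primitive r 0) \<longlongrightarrow>
           4 * b\<^sup>2 * ln (2 * sin b) + 4 * b * Im (polylog 2 (cis (2 * b)))
           + 2 * Re (polylog 3 (cis (2 * b))) - 2 * Re (polylog 3 1)) (at_left 1)"
proof -
  have "sin b > 0" using assms by (intro sin_gt_zero)
  have nz: "1 - rcis r t \<noteq> 0" if "\<bar>r\<bar> < 1" for r t
  proof
    assume "1 - rcis r t = 0"
    then have "cmod (rcis r t) = 1" by (simp add: right_minus_eq)
    with that show False by simp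
  qed
  have "\<forall>\<^sub>F r in at_left 1. r \<in> {0<..<(1::real)}"
    by (rule eventually_at_left_real) simp
  then have "\<forall>\<^sub>F r in at_left 1. 4 * b\<^sup>2 * ln (cmod (1 - rcis r (2 * b)))
      + 4 * b * Im (polylog 2 (rcis r (2 * b))) + 2 * Re (polylog 3 (rcis r (2 * b)))
      - 2 * Re (polylog 3 (rcis r 0)) = polylog_primitive r b - polylog_primitive r 0"
  proof eventually_elim
    case (elim r)
    then have "1 - rcis r (2 * b) \<noteq> 0" by (intro nz) auto
    then show ?case by (simp add: polylog_primitive_def)
  qed
  moreover have "((\<lambda>r. 4 * b\<^sup>2 * ln (cmod (1 - rcis r (2 * b)))
      + 4 * b * Im (polylog 2 (rcis r (2 * b))) + 2 * Re (polylog 3 (rcis r (2 * b)))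
      - 2 * Re (polylog 3 (rcis r 0))) \<longlongrightarrow>
        4 * b\<^sup>2 * ln (2 * sin b) + 4 * b * Im (polylog 2 (cis (2 * b)))
        + 2 * Re (polylog 3 (cis (2 * b))) - 2 * Re (polylog 3 1)) (at_left 1)"
    using \<open>sin b > 0\<close> norm_one_minus_cis_double[of b] tendsto_polylog_rcis[of 2 "2 * b"]
      tendsto_polylog_rcis[of 3 "2 * b"] tendsto_polylog_rcis[of 3 0]
    by (auto intro!: tendsto_eq_intros simp: rcis_one)
  ultimately show ?thesis by (rule Lim_transform_eventually[rotated])
qed

lemma central_binom_series_3_sin_sq:
  assumes b: "0 < b" "b \<le> pi / 3"
  shows "central_binom_series 3 (4 * sin b ^ 2)
           = 4 * b\<^sup>2 * ln (2 * sin b) + 4 * b * Im (polylog 2 (cis (2 * b)))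
             + 2 * Re (polylog 3 (cis (2 * b))) - 2 * Re (polylog 3 1)"
    (is "?F = ?V")
proof -
  define L where "L r = polylog_primitive r b - polylog_primitive r 0" for r
  have "((\<lambda>r. L r - ?F) \<longlongrightarrow> 0) (at_left 1)"
  proof (rule Lim_null_comparison)
    have "\<forall>\<^sub>F r in at_left 1. r \<in> {1/4<..<(1::real)}"
      by (rule eventually_at_left_real) simp
    then show "\<forall>\<^sub>F r in at_left 1. norm (L r - ?F) \<le> 8 * (1 - r) * b"
      by eventually_elim (use b abs_polylog_primitive_diff_le in \<open>auto simp: L_def\<close>)
    show "((\<lambda>r. 8 * (1 - r) * b) \<longlongrightarrow> 0) (at_left 1)"
      by (auto intro!: tendsto_eq_intros)
  qed
  then have "(L \<longlongrightarrow> ?F) (at_left 1)" by (rule LIM_zero_cancel)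
  moreover have "(L \<longlongrightarrow> ?V) (at_left 1)"
    unfolding L_def using b pi_gt_zero by (intro tendsto_polylog_primitive_diff) linarith+
  ultimately show ?thesis
    using tendsto_unique[OF trivial_limit_at_left_real] by blast
qed

section \<open>Polylogarithms at the sixth root of unity\<close>

lemma zeta_nat_sums:
  assumes "2 \<le> s"
  shows "(\<lambda>n. 1 / real n ^ s) sums zeta_nat s"
proof -
  have "summable (\<lambda>n. 1 / real n ^ s)"
    using inverse_power_summable[OF assms, where 'a = real] by (simp add: divide_inverse)
  then have "summable (\<lambda>n. 1 / real (Suc n) ^ s)"
    by (subst summable_Suc_iff)
  then have "(\<lambda>n. 1 / real (Suc n) ^ s) sums zeta_nat s"
    unfolding zeta_nat_def by (rule summable_sums)
  then have "(\<lambda>n. 1 / real n ^ s) sums (zeta_nat s + 1 / real 0 ^ s)"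
    by (rule iffD1[OF sums_Suc_iff[of "\<lambda>n. 1 / real n ^ s"]])
  then show ?thesis
    using assms by (simp add: power_0_left) \<comment> \<open>the extra term is \<open>1 / 0 = 0\<close>\<close>
qed

lemma sums_inverse_power_multiples:
  assumes "0 < d" "2 \<le> s"
  shows "(\<lambda>n. if n mod d = 0 then 1 / real n ^ s else 0) sums (zeta_nat s / real d ^ s)"
proof -
  have "(\<lambda>k. 1 / real k ^ s / real d ^ s) sums (zeta_nat s / real d ^ s)"
    by (rule sums_divide[OF zeta_nat_sums[OF assms(2)]])
  then have "(\<lambda>k. 1 / real (d * k + 0) ^ s) sums (zeta_nat s / real d ^ s)"
    by (simp add: power_mult_distrib mult.commute)
  then show ?thesis
    using sums_progression_iff[of 0 d "\<lambda>n. 1 / real n ^ s"] assms(1) by simp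
qed

lemma sums_inverse_square_residue:
  assumes "0 < j" "j < d"
  shows "(\<lambda>n. if n mod d = j then 1 / real n ^ 2 else 0)
           sums (Polygamma 1 (real j / real d) / real d ^ 2)"
proof -
  have "(\<lambda>k. inverse ((real j / real d + real k) ^ 2)) sums Polygamma 1 (real j / real d)"
    using Polygamma_LIMSEQ[of "real j / real d" 1] assms by (simp add: numeral_2_eq_2)
  then have "(\<lambda>k. inverse ((real j / real d + real k) ^ 2) / real d ^ 2)
      sums (Polygamma 1 (real j / real d) / real d ^ 2)"
    by (rule sums_divide)
  moreover have "inverse ((real j / real d + real k) ^ 2) / real d ^ 2 = 1 / real (d * k + j) ^ 2" for k
    using assms by (simp add: field_simps)
  ultimately show ?thesis
    using sums_progression_iff[of j d "\<lambda>n. 1 / real n ^ 2"] assms(2) by simp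
qed

lemma cis_pi_third: "cis (pi / 3) = Complex (1 / 2) (sqrt 3 / 2)"
  by (simp add: cis.ctr cos_60 sin_60)

lemma cis_pi_third_powers:
  "cis (pi / 3) ^ 2 = cis (pi / 3) - 1" "cis (pi / 3) ^ 3 = -1" "cis (pi / 3) ^ 4 = - cis (pi / 3)"
  "cis (pi / 3) ^ 5 = 1 - cis (pi / 3)" "cis (pi / 3) ^ 6 = 1"
proof -
  let ?\<omega> = "cis (pi / 3)"
  show sq: "?\<omega> ^ 2 = ?\<omega> - 1"
    unfolding cis_pi_third power2_eq_square by (simp add: complex_eq_iff)
  have "?\<omega> ^ 3 = ?\<omega> ^ 2 * ?\<omega>" using power_add[of ?\<omega> 2 1] by simp
  also have "\<dots> = (?\<omega> - 1) * ?\<omega>" by (simp only: sq)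
  also have "\<dots> = ?\<omega> ^ 2 - ?\<omega>" by (simp add: power2_eq_square algebra_simps)
  finally show cube: "?\<omega> ^ 3 = -1" by (simp add: sq)
  show "?\<omega> ^ 4 = - ?\<omega>" using power_add[of ?\<omega> 3 1] by (simp add: cube)
  show "?\<omega> ^ 5 = 1 - ?\<omega>" using power_add[of ?\<omega> 3 2] by (simp add: cube sq)
  show "?\<omega> ^ 6 = 1" using power_add[of ?\<omega> 3 3] by (simp add: cube)
qed

lemma cis_pi_third_power_mod_6: "cis (pi / 3) ^ n = cis (pi / 3) ^ (n mod 6)"
proof -
  have "cis (pi / 3) ^ n = (cis (pi / 3) ^ 6) ^ (n div 6) * cis (pi / 3) ^ (n mod 6)"
    by (simp add: power_mult[symmetric] power_add[symmetric])
  then show ?thesis by (simp add: cis_pi_third_powers(5))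
qed

lemma Re_cis_pi_third_power:
  "Re (cis (pi / 3) ^ n)
     = 1 / 2 - of_bool (n mod 2 = 0) - 3 / 2 * of_bool (n mod 3 = 0) + 3 * of_bool (n mod 6 = 0)"
proof -
  define j where "j = n mod 6"
  have "j \<in> {0, 1, 2, 3, 4, 5}" unfolding j_def by auto
  moreover have "n mod 2 = j mod 2" "n mod 3 = j mod 3"
    unfolding j_def by (simp_all add: mod_mod_cancel)
  ultimately show ?thesis
    unfolding cis_pi_third_power_mod_6[of n] j_def[symmetric]
    by (auto simp: cis_pi_third_powers cos_60)
qed

lemma Im_cis_pi_third_power:
  "Im (cis (pi / 3) ^ n) = sqrt 3 / 2 * (of_bool (n mod 3 = 1) - of_bool (n mod 3 = 2)
     + 2 * of_bool (n mod 6 = 2) - 2 * of_bool (n mod 6 = 4))"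
proof -
  define j where "j = n mod 6"
  have "j \<in> {0, 1, 2, 3, 4, 5}" unfolding j_def by auto
  moreover have "n mod 3 = j mod 3"
    unfolding j_def by (simp add: mod_mod_cancel)
  ultimately show ?thesis
    unfolding cis_pi_third_power_mod_6[of n] j_def[symmetric]
    by (auto simp: cis_pi_third_powers sin_60)
qed

lemma polylog_coeff_eq: "0 < s \<Longrightarrow> polylog_coeff s n = of_real (1 / real n ^ s)"
  by (simp add: polylog_coeff_def)

lemma Re_polylog_one:
  assumes "2 \<le> s"
  shows "Re (polylog s 1) = zeta_nat s"
proof -
  have "(\<lambda>n. 1 / real n ^ s) sums Re (polylog s 1)"
    using polylog_sums[OF assms, of 1] assms by (simp add: sums_complex_iff polylog_coeff_eq)
  then show ?thesis using zeta_nat_sums[OF assms] sums_unique2 by blast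
qed

lemma Re_polylog_3_cis_pi_third: "Re (polylog 3 (cis (pi / 3))) = zeta_nat 3 / 3"
proof -
  define m where "m d n = (if n mod d = 0 then 1 / real n ^ 3 else 0)" for d n :: nat
  have "(\<lambda>n. Re (polylog_coeff 3 n * cis (pi / 3) ^ n)) sums Re (polylog 3 (cis (pi / 3)))"
    using polylog_sums[of 3 "cis (pi / 3)"] unfolding sums_complex_iff by simp
  moreover have "Re (polylog_coeff 3 n * cis (pi / 3) ^ n)
      = 1 / 2 * (1 / real n ^ 3) - m 2 n - 3 / 2 * m 3 n + 3 * m 6 n" for n
    by (simp add: polylog_coeff_eq Re_cis_pi_third_power m_def algebra_simps)
  ultimately have Re_sums: "(\<lambda>n. 1 / 2 * (1 / real n ^ 3) - m 2 n - 3 / 2 * m 3 n + 3 * m 6 n)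
      sums Re (polylog 3 (cis (pi / 3)))"
    by (simp only:)
  have "(\<lambda>n. 1 / real n ^ 3) sums zeta_nat 3" by (rule zeta_nat_sums) simp
  moreover have "(\<lambda>n. m 2 n) sums (zeta_nat 3 / 2 ^ 3)" "(\<lambda>n. m 3 n) sums (zeta_nat 3 / 3 ^ 3)"
    "(\<lambda>n. m 6 n) sums (zeta_nat 3 / 6 ^ 3)"
    unfolding m_def
    using sums_inverse_power_multiples[of 2 3] sums_inverse_power_multiples[of 3 3]
      sums_inverse_power_multiples[of 6 3]
    by simp_all
  ultimately have "(\<lambda>n. 1 / 2 * (1 / real n ^ 3) - m 2 n - 3 / 2 * m 3 n + 3 * m 6 n)
      sums (1 / 2 * zeta_nat 3 - zeta_nat 3 / 2 ^ 3 - 3 / 2 * (zeta_nat 3 / 3 ^ 3) + 3 * (zeta_nat 3 / 6 ^ 3))"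
    by (intro sums_add sums_diff sums_mult)
  with Re_sums show ?thesis
    using sums_unique2 by fastforce
qed

lemma Im_polylog_2_cis_pi_third:
  "Im (polylog 2 (cis (pi / 3))) = sqrt 3 / 12 * (Polygamma 1 (1 / 3) - Polygamma 1 (2 / 3))"
proof -
  define m where "m d j n = (if n mod d = j then 1 / real n ^ 2 else 0)" for d j n :: nat
  have "(\<lambda>n. Im (polylog_coeff 2 n * cis (pi / 3) ^ n)) sums Im (polylog 2 (cis (pi / 3)))"
    using polylog_sums[of 2 "cis (pi / 3)"] unfolding sums_complex_iff by simp
  moreover have "Im (polylog_coeff 2 n * cis (pi / 3) ^ n)
      = sqrt 3 / 2 * (m 3 1 n - m 3 2 n + 2 * m 6 2 n - 2 * m 6 4 n)" for n
    by (simp add: polylog_coeff_eq Im_cis_pi_third_power m_def algebra_simps)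
  ultimately have Im_sums: "(\<lambda>n. sqrt 3 / 2 * (m 3 1 n - m 3 2 n + 2 * m 6 2 n - 2 * m 6 4 n))
      sums Im (polylog 2 (cis (pi / 3)))"
    by (simp only:)
  have "(\<lambda>n. m 3 1 n) sums (Polygamma 1 (1 / 3) / 3 ^ 2)"
    "(\<lambda>n. m 3 2 n) sums (Polygamma 1 (2 / 3) / 3 ^ 2)"
    "(\<lambda>n. m 6 2 n) sums (Polygamma 1 (1 / 3) / 6 ^ 2)"
    "(\<lambda>n. m 6 4 n) sums (Polygamma 1 (2 / 3) / 6 ^ 2)"
    unfolding m_def
    using sums_inverse_square_residue[of 1 3] sums_inverse_square_residue[of 2 3]
      sums_inverse_square_residue[of 2 6] sums_inverse_square_residue[of 4 6]
    by simp_all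
  then have "(\<lambda>n. sqrt 3 / 2 * (m 3 1 n - m 3 2 n + 2 * m 6 2 n - 2 * m 6 4 n))
      sums (sqrt 3 / 2 * (Polygamma 1 (1 / 3) / 3 ^ 2 - Polygamma 1 (2 / 3) / 3 ^ 2
              + 2 * (Polygamma 1 (1 / 3) / 6 ^ 2) - 2 * (Polygamma 1 (2 / 3) / 6 ^ 2)))"
    by (intro sums_add sums_diff sums_mult)
  with Im_sums show ?thesis
    using sums_unique2 by fastforce
qed

theorem mainTheorem4:
  shows "(\<lambda>n. 1 / ((real (Suc n)) ^ 3 * real ((2 * Suc n) choose (Suc n))))
           sums (pi * sqrt 3 / 18 * (Polygamma 1 (1/3 :: real) - Polygamma 1 (2/3 :: real))
                 - 4/3 * zeta_nat 3)"
proof -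
  have "(\<lambda>n. central_binom_coeff 3 (Suc n) * 1 ^ Suc n) sums central_binom_series 3 1"
    by (rule central_binom_series_sums_Suc) simp
  moreover have "central_binom_coeff 3 (Suc n) * 1 ^ Suc n
      = 1 / ((real (Suc n)) ^ 3 * real ((2 * Suc n) choose (Suc n)))" for n
    by (simp add: central_binom_coeff_def)
  moreover have "central_binom_series 3 1
      = pi * sqrt 3 / 18 * (Polygamma 1 (1/3) - Polygamma 1 (2/3)) - 4/3 * zeta_nat 3"
    using central_binom_series_3_sin_sq[of "pi / 6"]
    by (simp add: sin_30 power_divide Im_polylog_2_cis_pi_third Re_polylog_3_cis_pi_third
        Re_polylog_one field_simps)
  ultimately show ?thesis by simp
qed

end
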